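(* Let $(a_n)_{n\ge1}$ be a bounded relative convex real sequence, and suppose there exists $(t_n)_{n\ge1}\in T_a$ with $\liminf_{n\to\infty}\Delta t_n>0$. Then $$n\,\frac{\Delta a_n}{\Delta t_n}\to0\quad (n\to\infty),$$ and the series $\sum_{n\ge1} n\,\Delta\!\left(\frac{\Delta a_n}{\Delta t_n}\right)$ converges.
   Context: For a real sequence $(x_i)$, $\Delta x_i=x_{i+1}-x_i$ (applied also to the sequence $x_n=\Delta a_n/\Delta t_n$). "Increasing" means strictly increasing. For a real sequence $a=(a_i)_{i\ge1}$, $T_a$ denotes the set of increasing real sequences $(t_i)_{i\ge1}$ such that $(\Delta a_i/\Delta t_i)_{i\ge1}$ is non-decreasing; $a$ is relative convex if $T_a\neq\emptyset$. *)

theory Defs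
  imports "HOL-Analysis.Analysis" "HOL-Library.Liminf_Limsup"
begin

text \<open>Sequences are indexed from 1; values at index 0 are irrelevant.\<close>

definition fdiff :: "(nat \<Rightarrow> real) \<Rightarrow> nat \<Rightarrow> real" ("\<Delta>") where
  "\<Delta> x i = x (Suc i) - x i"

definition dquot :: "(nat \<Rightarrow> real) \<Rightarrow> (nat \<Rightarrow> real) \<Rightarrow> nat \<Rightarrow> real" where
  "dquot a t n = \<Delta> a n / \<Delta> t n"

definition T_set :: "(nat \<Rightarrow> real) \<Rightarrow> (nat \<Rightarrow> real) set" where
  "T_set a = {t. (\<forall>i\<ge>1. t i < t (Suc i)) \<and> (\<forall>i\<ge>1. dquot a t i \<le> dquot a t (Suc i))}"

definition relative_convex :: "(nat \<Rightarrow> real) \<Rightarrow> bool" where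
  "relative_convex a \<longleftrightarrow> T_set a \<noteq> {}"

end

theory Submission
  imports Defs
begin

text \<open>The liminf hypothesis bounds the steps of \<open>t\<close> below by some \<open>d > 0\<close>. The slopes
  \<open>x\<^sub>n = \<Delta>a\<^sub>n / \<Delta>t\<^sub>n\<close> are nondecreasing, so a positive slope would make the bounded
  sequence \<open>a\<close> grow linearly; hence \<open>x\<^sub>n \<le> 0\<close>, and telescoping gives
  \<open>d \<Sum> (-x\<^sub>n) \<le> a\<^sub>1 - a\<^sub>N\<close>, so \<open>-x\<close> is a nonincreasing summable sequence.
  Olivier's theorem yields \<open>n x\<^sub>n \<longrightarrow> 0\<close>, and Abel summation turns
  \<open>\<Sum> n \<Delta>x\<^sub>n\<close> into \<open>N x\<^sub>N - \<Sum> x\<^sub>n\<close>, which converges.\<close>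

lemma liminf_gt_zero_imp_uniform_lower_bound:
  fixes f :: "nat \<Rightarrow> real"
  assumes pos: "\<And>i. m \<le> i \<Longrightarrow> 0 < f i"
    and lim: "0 < liminf (\<lambda>n. ereal (f n))"
  obtains d where "0 < d" "\<And>i. m \<le> i \<Longrightarrow> d \<le> f i"
proof -
  obtain c where c: "0 < ereal c" "ereal c < liminf (\<lambda>n. ereal (f n))"
    using ereal_dense2[OF lim] by blast
  then obtain N where N: "\<And>n. N \<le> n \<Longrightarrow> c < f n"
    using less_LiminfD[OF c(2)] by (auto simp: eventually_sequentially)
  define d where "d = min c (Min (f ` {m..max m N}))"
  have "0 < d"
    using c(1) pos by (auto simp: d_def)
  moreover have "d \<le> f i" if "m \<le> i" for i
  proof (cases "N \<le> i")
    case True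
    then show ?thesis using N[of i] by (simp add: d_def)
  next
    case False
    then have "Min (f ` {m..max m N}) \<le> f i"
      using that by (intro Min_le) auto
    then show ?thesis by (simp add: d_def)
  qed
  ultimately show ?thesis using that by blast
qed

lemma decseq_summable_mult_tendsto_zero:
  fixes f :: "nat \<Rightarrow> real"
  assumes nonneg: "\<And>n. 0 \<le> f n" and dec: "decseq f" and "summable f"
  shows "(\<lambda>n. real n * f n) \<longlonglongrightarrow> 0"
proof (rule LIMSEQ_I)
  fix e :: real
  assume "0 < e"
  then obtain N where N: "\<And>n. norm (sum f {N..<n}) < e / 2"
    using \<open>summable f\<close> unfolding summable_Cauchy by (meson half_gt_zero order_refl)
  have "norm (real n * f n - 0) < e" if "2 * N \<le> n" for n
  proof -
    have "real (n - N) * f n = (\<Sum>k=N..<n. f n)"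
      by simp
    also have "\<dots> \<le> sum f {N..<n}"
      using dec by (intro sum_mono) (simp add: decseqD)
    also have "\<dots> < e / 2"
      using N[of n] by simp
    finally have half: "real (n - N) * f n < e / 2" .
    have "real n * f n \<le> 2 * real (n - N) * f n"
      using that nonneg[of n] by (intro mult_right_mono) auto
    then show ?thesis
      using half nonneg[of n] by simp
  qed
  then show "\<exists>no. \<forall>n\<ge>no. norm (real n * f n - 0) < e"
    by blast
qed

lemma weighted_differences_sums:
  fixes y :: "nat \<Rightarrow> real"
  assumes "summable y" and "(\<lambda>n. real n * y n) \<longlonglongrightarrow> 0"
  shows "(\<lambda>n. real (Suc n) * (y (Suc n) - y n)) sums (- suminf y)"
proof -
  have partial_sums: "(\<Sum>n<N. real (Suc n) * (y (Suc n) - y n)) = real N * y N - (\<Sum>n<N. y n)"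
    for N
    by (induction N) (simp_all add: algebra_simps)
  have "(\<lambda>N. real N * y N - (\<Sum>n<N. y n)) \<longlonglongrightarrow> 0 - suminf y"
    using assms by (intro tendsto_diff summable_LIMSEQ)
  then show ?thesis
    unfolding sums_def partial_sums by simp
qed

lemma T_set_Delta_pos:
  assumes "t \<in> T_set a" and "1 \<le> i"
  shows "0 < \<Delta> t i"
  using assms unfolding T_set_def fdiff_def by auto

lemma T_set_dquot_mono:
  assumes "t \<in> T_set a" and "1 \<le> i" and "i \<le> j"
  shows "dquot a t i \<le> dquot a t j"
  using assms(3)
proof (induction j rule: dec_induct)
  case (step j)
  have "dquot a t j \<le> dquot a t (Suc j)"
    using assms(1,2) step.hyps unfolding T_set_def by simp
  with step.IH show ?case
    by simp
qed simp

lemma T_set_diff_eq_sum: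
  assumes "t \<in> T_set a" and "1 \<le> m" and "m \<le> n"
  shows "a n - a m = (\<Sum>j=m..<n. dquot a t j * \<Delta> t j)"
proof -
  have "dquot a t j * \<Delta> t j = a (Suc j) - a j" if "j \<in> {m..<n}" for j
    using T_set_Delta_pos[OF assms(1), of j] that assms(2)
    unfolding dquot_def fdiff_def by simp
  then show ?thesis
    using sum_Suc_diff'[OF assms(3), of a] by simp
qed

context
  fixes a t :: "nat \<Rightarrow> real" and d :: real
  assumes bounded: "bounded (a ` {1..})"
    and t: "t \<in> T_set a"
    and d_pos: "0 < d"
    and d_le: "\<And>i. 1 \<le> i \<Longrightarrow> d \<le> \<Delta> t i"
begin

lemma bounded_dquot_nonpos:
  assumes "1 \<le> k"
  shows "dquot a t k \<le> 0"
proof (rule ccontr)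
  assume "\<not> dquot a t k \<le> 0"
  then have slope: "0 < dquot a t k * d"
    using d_pos by simp
  obtain B where B: "\<And>n. 1 \<le> n \<Longrightarrow> \<bar>a n\<bar> \<le> B"
    using bounded unfolding bounded_iff by auto
  obtain n where n: "2 * B < real n * (dquot a t k * d)"
    using reals_Archimedean3[OF slope] by blast
  have "real n * (dquot a t k * d) = (\<Sum>j=k..<k+n. dquot a t k * d)"
    by simp
  also have "\<dots> \<le> (\<Sum>j=k..<k+n. dquot a t j * \<Delta> t j)"
  proof (rule sum_mono)
    fix j assume j: "j \<in> {k..<k+n}"
    have "dquot a t k \<le> dquot a t j"
      using T_set_dquot_mono[OF t assms] j by simp
    moreover have "d \<le> \<Delta> t j"
      using d_le assms j by simp
    ultimately show "dquot a t k * d \<le> dquot a t j * \<Delta> t j"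
      using slope d_pos by (intro mult_mono) (auto simp: zero_less_mult_iff)
  qed
  also have "\<dots> = a (k + n) - a k"
    using T_set_diff_eq_sum[OF t assms] by simp
  also have "\<dots> \<le> 2 * B"
    using B[of k] B[of "k + n"] assms by auto
  finally show False
    using n by simp
qed

lemma bounded_summable_dquot:
  "summable (\<lambda>n. dquot a t (Suc n))"
proof -
  obtain B where B: "\<And>n. 1 \<le> n \<Longrightarrow> \<bar>a n\<bar> \<le> B"
    using bounded unfolding bounded_iff by auto
  have "summable (\<lambda>n. - dquot a t (Suc n))"
  proof (rule summableI_nonneg_bounded)
    fix N
    have "d * (\<Sum>n<N. - dquot a t (Suc n)) = (\<Sum>n<N. - dquot a t (Suc n) * d)"
      by (simp add: sum_distrib_left mult.commute)
    also have "\<dots> \<le> (\<Sum>n<N. - dquot a t (Suc n) * \<Delta> t (Suc n))"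
      using bounded_dquot_nonpos d_le by (intro sum_mono mult_left_mono) auto
    also have "\<dots> = - (\<Sum>j=1..<Suc N. dquot a t j * \<Delta> t j)"
      by (simp only: One_nat_def sum.shift_bounds_Suc_ivl atLeast0LessThan sum_negf mult_minus_left)
    also have "\<dots> = a 1 - a (Suc N)"
      using T_set_diff_eq_sum[OF t, of 1 "Suc N"] by simp
    also have "\<dots> \<le> 2 * B"
      using B[of 1] B[of "Suc N"] by auto
    finally show "(\<Sum>n<N. - dquot a t (Suc n)) \<le> 2 * B / d"
      using d_pos by (simp add: field_simps)
  qed (use bounded_dquot_nonpos in simp)
  then show ?thesis
    using summable_minus_iff by blast
qed

lemma bounded_mult_dquot_tendsto_zero:
  "(\<lambda>n. real n * dquot a t (Suc n)) \<longlonglongrightarrow> 0"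
proof -
  have "(\<lambda>n. real n * - dquot a t (Suc n)) \<longlonglongrightarrow> 0"
  proof (rule decseq_summable_mult_tendsto_zero)
    show "decseq (\<lambda>n. - dquot a t (Suc n))"
      by (intro decseq_SucI) (simp add: T_set_dquot_mono[OF t])
    show "summable (\<lambda>n. - dquot a t (Suc n))"
      using bounded_summable_dquot by (rule summable_minus)
  qed (use bounded_dquot_nonpos in simp)
  from tendsto_minus[OF this] show ?thesis
    by simp
qed

end

theorem proposition3p5:
  fixes a t :: "nat \<Rightarrow> real"
  assumes "bounded (a ` {1..})"
    and "relative_convex a"
    and "t \<in> T_set a"
    and "liminf (\<lambda>n. ereal (\<Delta> t n)) > 0"
  shows "(\<lambda>n. real n * dquot a t n) \<longlonglongrightarrow> 0 \<and>
         summable (\<lambda>n. real (Suc n) * \<Delta> (dquot a t) (Suc n))"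
proof -
  obtain d where d: "0 < d" "\<And>i. 1 \<le> i \<Longrightarrow> d \<le> \<Delta> t i"
    using liminf_gt_zero_imp_uniform_lower_bound[of 1 "\<Delta> t"] T_set_Delta_pos[OF assms(3)] assms(4)
    by blast
  note summable = bounded_summable_dquot[OF assms(1,3) d]
  note mult_lim = bounded_mult_dquot_tendsto_zero[OF assms(1,3) d]
  have "(\<lambda>n. real (Suc n) * dquot a t (Suc n)) \<longlonglongrightarrow> 0"
    using tendsto_add[OF mult_lim summable_LIMSEQ_zero[OF summable]]
    by (simp add: algebra_simps)
  then have "(\<lambda>n. real n * dquot a t n) \<longlonglongrightarrow> 0"
    by (rule LIMSEQ_imp_Suc)
  moreover have "summable (\<lambda>n. real (Suc n) * \<Delta> (dquot a t) (Suc n))"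
    using weighted_differences_sums[OF summable mult_lim]
    unfolding fdiff_def by (rule sums_summable)
  ultimately show ?thesis ..
qed

end
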